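(* Let $G$ be a finite group, $s \in G^{\#}$ and $c$ a positive integer. Let $\{x_1,\ldots,x_k\}$ be a set of representatives of the conjugacy classes of elements of prime order in $G$. Then \[ Q(G,s,c) \leqslant \sum_{i=1}^{k} |x_i^G| \left( \sum_{H \in \mathcal{M}(G,s)} {\rm fpr}(x_i,G/H) \right)^c. \]
   Context: $G^{\#}$ is the set of non-identity elements of $G$. A subset $S\subseteq G^{\#}$ is a total dominating set for the generating graph of $G$ if for every $g\in G^{\#}$ there exists $z\in S$ with $G=\langle g,z\rangle$. $Q(G,s,c)$ is the probability that for a uniformly random $c$-tuple $(z_1,\ldots,z_c)$ of conjugates of $s$, the set $\{z_1,\ldots,z_c\}$ is not a total dominating set. $\mathcal{M}(G,s)$ is the set of maximal subgroups of $G$ containing $s$. For $x\in G$ and $H<G$, ${\rm fpr}(x,G/H)=|x^G\cap H|/|x^G|$ (the fixed point ratio of $x$ on $G/H$). *)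

theory Defs
  imports Complex_Main "HOL-Algebra.Algebra" "HOL-Library.FuncSet"
begin

definition conj_class :: "('a, 'b) monoid_scheme \<Rightarrow> 'a \<Rightarrow> 'a set" where
  "conj_class G x = {g \<otimes>\<^bsub>G\<^esub> x \<otimes>\<^bsub>G\<^esub> inv\<^bsub>G\<^esub> g | g. g \<in> carrier G}"

definition nonid :: "('a, 'b) monoid_scheme \<Rightarrow> 'a set" where
  "nonid G = carrier G - {\<one>\<^bsub>G\<^esub>}"

text \<open>Total dominating set of the generating graph.\<close>
definition total_dominating :: "('a, 'b) monoid_scheme \<Rightarrow> 'a set \<Rightarrow> bool" where
  "total_dominating G S \<longleftrightarrow> S \<subseteq> nonid G \<and>
     (\<forall>g \<in> nonid G. \<exists>z \<in> S. generate G {g, z} = carrier G)"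

text \<open>Q(G,s,c): probability that a uniformly random c-tuple of conjugates of s
  (tuples modelled as extensional functions on {..<c}) is not a total dominating set.\<close>
definition Qprob :: "('a, 'b) monoid_scheme \<Rightarrow> 'a \<Rightarrow> nat \<Rightarrow> real" where
  "Qprob G s c =
     real (card {f \<in> {..<c} \<rightarrow>\<^sub>E conj_class G s. \<not> total_dominating G (f ` {..<c})})
     / real (card ({..<c} \<rightarrow>\<^sub>E conj_class G s))"

definition maximal_subgroup :: "'a set \<Rightarrow> ('a, 'b) monoid_scheme \<Rightarrow> bool" where
  "maximal_subgroup H G \<longleftrightarrow> subgroup H G \<and> H \<noteq> carrier G \<and>
     (\<forall>K. subgroup K G \<and> H \<subseteq> K \<longrightarrow> K = H \<or> K = carrier G)"

definition max_over :: "('a, 'b) monoid_scheme \<Rightarrow> 'a \<Rightarrow> 'a set set" where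
  "max_over G s = {H. maximal_subgroup H G \<and> s \<in> H}"

definition fpr :: "('a, 'b) monoid_scheme \<Rightarrow> 'a \<Rightarrow> 'a set \<Rightarrow> real" where
  "fpr G x H = real (card (conj_class G x \<inter> H)) / real (card (conj_class G x))"

end

theory Submission
  imports Defs "HOL-Algebra.Group_Action"
begin

text \<open>A tuple of conjugates of \<open>s\<close> fails to be totally dominating only if some element \<open>y\<close>
  of prime order lies in a proper subgroup together with each entry. For fixed \<open>y\<close>, a random
  conjugate \<open>h s h\<inverse>\<close> shares a proper subgroup with \<open>y\<close> only if \<open>s\<close> and \<open>h\<inverse> y h\<close> lie in a
  common maximal subgroup \<open>H \<in> \<M>(G,s)\<close>; as \<open>h\<inverse> y h\<close> is uniformly distributed on \<open>y\<^sup>G\<close>, this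
  has probability at most \<open>\<Sum>\<^sub>H fpr(y, G/H)\<close>. A union bound over \<open>y\<close>, grouped into conjugacy
  classes, gives the claim.\<close>

definition in_proper_subgroup :: "('a, 'b) monoid_scheme \<Rightarrow> 'a set \<Rightarrow> bool" where
  "in_proper_subgroup G A \<longleftrightarrow> (\<exists>K. subgroup K G \<and> K \<noteq> carrier G \<and> A \<subseteq> K)"

context group
begin

lemma conj_class_subset_carrier: "x \<in> carrier G \<Longrightarrow> conj_class G x \<subseteq> carrier G"
  unfolding conj_class_def by auto

lemma conj_in_conj_class: "x \<in> carrier G \<Longrightarrow> g \<in> carrier G \<Longrightarrow> g \<otimes> x \<otimes> inv g \<in> conj_class G x"
  unfolding conj_class_def by blast

lemma conj_conj:
  assumes "x \<in> carrier G" "g \<in> carrier G" "h \<in> carrier G"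
  shows "h \<otimes> (g \<otimes> x \<otimes> inv g) \<otimes> inv h = (h \<otimes> g) \<otimes> x \<otimes> inv (h \<otimes> g)"
  using assms by (simp add: inv_mult_group m_assoc)

lemma inv_mult_cancel_left: "x \<in> carrier G \<Longrightarrow> g \<in> carrier G \<Longrightarrow> inv g \<otimes> (g \<otimes> x) = x"
  by (simp add: m_assoc[symmetric])

lemma inv_conj_conj: "x \<in> carrier G \<Longrightarrow> g \<in> carrier G \<Longrightarrow> inv g \<otimes> (g \<otimes> x \<otimes> inv g) \<otimes> g = x"
  by (simp add: m_assoc inv_mult_cancel_left)

lemma conj_class_trans:
  assumes "x \<in> carrier G" "y \<in> conj_class G x" "z \<in> conj_class G y"
  shows "z \<in> conj_class G x"
proof -
  obtain g where g: "g \<in> carrier G" "y = g \<otimes> x \<otimes> inv g"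
    using assms(2) unfolding conj_class_def by blast
  obtain h where h: "h \<in> carrier G" "z = h \<otimes> y \<otimes> inv h"
    using assms(3) unfolding conj_class_def by blast
  show ?thesis
    using conj_in_conj_class[OF assms(1), of "h \<otimes> g"] conj_conj[OF assms(1) g(1) h(1)] g h by simp
qed

lemma conj_class_sym:
  assumes "x \<in> carrier G" "y \<in> conj_class G x"
  shows "x \<in> conj_class G y"
proof -
  obtain g where g: "g \<in> carrier G" "y = g \<otimes> x \<otimes> inv g"
    using assms(2) unfolding conj_class_def by blast
  then have "x = inv g \<otimes> y \<otimes> inv (inv g)"
    using assms(1) inv_conj_conj by simp
  then show ?thesis
    using conj_in_conj_class[of y "inv g"] g assms(1) by simp
qed

lemma conj_class_eq: "x \<in> carrier G \<Longrightarrow> y \<in> conj_class G x \<Longrightarrow> conj_class G y = conj_class G x"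
  by (meson conj_class_subset_carrier conj_class_sym conj_class_trans subsetD subsetI subset_antisym)

lemma nat_pow_conj:
  assumes "x \<in> carrier G" "g \<in> carrier G"
  shows "(g \<otimes> x \<otimes> inv g) [^] (n::nat) = g \<otimes> x [^] n \<otimes> inv g"
proof (induction n)
  case (Suc n)
  then show ?case
    using assms by (simp add: m_assoc inv_mult_cancel_left)
qed (use assms in \<open>simp add: m_assoc[symmetric]\<close>)

lemma ord_conj_class:
  assumes "x \<in> carrier G" "y \<in> conj_class G x"
  shows "ord y = ord x"
proof -
  obtain g where g: "g \<in> carrier G" "y = g \<otimes> x \<otimes> inv g"
    using assms(2) unfolding conj_class_def by blast
  have "y [^] n = \<one> \<longleftrightarrow> x [^] n = \<one>" for n :: nat
    using g nat_pow_conj[OF assms(1) g(1), of n] assms(1)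
    by (metis conjugation_is_inj inv_closed nat_pow_closed one_closed r_inv r_one)
  then show ?thesis
    using assms ord_unique pow_eq_id g by simp
qed

lemma card_conj_fiber:
  assumes x: "x \<in> carrier G" and z: "z \<in> conj_class G x"
  shows "card {h \<in> carrier G. h \<otimes> x \<otimes> inv h = z} = card {h \<in> carrier G. h \<otimes> x \<otimes> inv h = x}"
proof -
  obtain g where g: "g \<in> carrier G" and z_def: "z = g \<otimes> x \<otimes> inv g"
    using z unfolding conj_class_def by blast
  let ?C = "{h \<in> carrier G. h \<otimes> x \<otimes> inv h = x}"
  have "{h \<in> carrier G. h \<otimes> x \<otimes> inv h = z} = (\<otimes>) g ` ?C"
  proof (intro equalityI subsetI)
    fix u assume u: "u \<in> {h \<in> carrier G. h \<otimes> x \<otimes> inv h = z}"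
    then have "inv g \<otimes> u \<in> ?C"
      using conj_conj[OF x, of u "inv g"] inv_conj_conj[OF x g] g z_def by auto
    moreover have "u = g \<otimes> (inv g \<otimes> u)"
      using u g by (simp add: m_assoc[symmetric])
    ultimately show "u \<in> (\<otimes>) g ` ?C" by blast
  next
    fix u assume "u \<in> (\<otimes>) g ` ?C"
    then obtain h where h: "h \<in> carrier G" "h \<otimes> x \<otimes> inv h = x" and u: "u = g \<otimes> h"
      by blast
    then show "u \<in> {h \<in> carrier G. h \<otimes> x \<otimes> inv h = z}"
      using conj_conj[OF x h(1) g] g z_def by simp
  qed
  moreover have "inj_on ((\<otimes>) g) ?C"
    using g by (auto intro: inj_onI)
  ultimately show ?thesis
    by (simp add: card_image)
qed

lemma card_conj_preimage:
  assumes "finite (carrier G)" "x \<in> carrier G" "D \<subseteq> conj_class G x"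
  shows "card {h \<in> carrier G. h \<otimes> x \<otimes> inv h \<in> D}
    = card D * card {h \<in> carrier G. h \<otimes> x \<otimes> inv h = x}"
proof -
  let ?F = "\<lambda>z. {h \<in> carrier G. h \<otimes> x \<otimes> inv h = z}"
  have "finite D"
    by (rule finite_subset[OF assms(3) finite_subset[OF conj_class_subset_carrier[OF assms(2)] assms(1)]])
  have "{h \<in> carrier G. h \<otimes> x \<otimes> inv h \<in> D} = (\<Union>z\<in>D. ?F z)"
    by blast
  moreover have "card (\<Union>z\<in>D. ?F z) = (\<Sum>z\<in>D. card (?F z))"
  proof (rule card_UN_disjoint[OF \<open>finite D\<close>])
    show "\<forall>z\<in>D. finite (?F z)"
      using assms(1) by simp
  qed blast
  ultimately have "card {h \<in> carrier G. h \<otimes> x \<otimes> inv h \<in> D} = (\<Sum>z\<in>D. card (?F z))"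
    by simp
  also have "\<dots> = (\<Sum>z\<in>D. card (?F x))"
    using card_conj_fiber assms(2,3) by (intro sum.cong) auto
  finally show ?thesis
    by simp
qed

lemma conj_preimage_proportion:
  assumes "finite (carrier G)" "x \<in> carrier G" "D \<subseteq> conj_class G x"
  shows "real (card {h \<in> carrier G. h \<otimes> x \<otimes> inv h \<in> D}) / real (order G)
    = real (card D) / real (card (conj_class G x))"
proof -
  define c where "c = card {h \<in> carrier G. h \<otimes> x \<otimes> inv h = x}"
  have "\<one> \<in> {h \<in> carrier G. h \<otimes> x \<otimes> inv h = x}"
    using assms(2) by simp
  then have "c > 0"
    using assms(1) by (auto simp: c_def card_gt_0_iff)
  have "{h \<in> carrier G. h \<otimes> x \<otimes> inv h \<in> conj_class G x} = carrier G"
    using conj_in_conj_class assms(2) by blast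
  then have order: "order G = card (conj_class G x) * c"
    using card_conj_preimage[OF assms(1,2) subset_refl] unfolding order_def c_def by argo
  have preimage: "card {h \<in> carrier G. h \<otimes> x \<otimes> inv h \<in> D} = card D * c"
    unfolding c_def by (rule card_conj_preimage[OF assms])
  show ?thesis
    unfolding order preimage of_nat_mult
    using \<open>c > 0\<close> by (intro mult_divide_mult_cancel_right) simp
qed

lemma card_Collect_inv: "card {h \<in> carrier G. P (inv h)} = card {h \<in> carrier G. P h}"
proof -
  have "{h \<in> carrier G. P (inv h)} = m_inv G ` {h \<in> carrier G. P h}"
  proof (intro equalityI subsetI)
    fix h assume "h \<in> {h \<in> carrier G. P (inv h)}"
    then show "h \<in> m_inv G ` {h \<in> carrier G. P h}"
      by (auto intro: image_eqI[of _ _ "inv h"])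
  qed auto
  moreover have "inj_on (m_inv G) {h \<in> carrier G. P h}"
    using inv_inj by (rule inj_on_subset) auto
  ultimately show ?thesis
    by (simp add: card_image)
qed

lemma in_proper_subgroup_conj:
  assumes g: "g \<in> carrier G" and A: "A \<subseteq> carrier G" and "in_proper_subgroup G A"
  shows "in_proper_subgroup G ((\<lambda>a. g \<otimes> a \<otimes> inv g) ` A)"
proof -
  obtain K where K: "subgroup K G" "K \<noteq> carrier G" "A \<subseteq> K"
    using assms(3) unfolding in_proper_subgroup_def by blast
  have mem_iff: "g \<otimes> b \<otimes> inv g \<in> g <# K #> inv g \<longleftrightarrow> b \<in> K" if "b \<in> carrier G" for b
    using g that subgroup.subset[OF K(1)] by (auto simp: l_coset_def r_coset_def)
  have "g <# K #> inv g \<noteq> carrier G"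
  proof
    assume "g <# K #> inv g = carrier G"
    then have "carrier G \<subseteq> K"
      using mem_iff g by auto
    then show False
      using K(2) subgroup.subset[OF K(1)] by blast
  qed
  moreover have "(\<lambda>a. g \<otimes> a \<otimes> inv g) ` A \<subseteq> g <# K #> inv g"
    using mem_iff K(3) A by auto
  ultimately show ?thesis
    unfolding in_proper_subgroup_def using subgroup_conjugation_is_surj2[OF g K(1)] by blast
qed

lemma in_proper_subgroup_maximal:
  assumes "finite (carrier G)" "in_proper_subgroup G A"
  shows "\<exists>M. maximal_subgroup M G \<and> A \<subseteq> M"
proof -
  define S where "S = {K. subgroup K G \<and> K \<noteq> carrier G \<and> A \<subseteq> K}"
  obtain K where "K \<in> S"
    using assms(2) unfolding in_proper_subgroup_def S_def by blast
  have "S \<subseteq> Pow (carrier G)"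
    unfolding S_def using subgroup.subset by blast
  then have "finite S"
    using assms(1) finite_subset by auto
  then obtain M where M: "M \<in> S" "\<And>L. L \<in> S \<Longrightarrow> M \<subseteq> L \<Longrightarrow> M = L"
    using finite_has_maximal2[OF _ \<open>K \<in> S\<close>] by metis
  have "maximal_subgroup M G"
    using M unfolding maximal_subgroup_def S_def by blast
  then show ?thesis
    using M(1) unfolding S_def by blast
qed

lemma exists_prime_order_power:
  assumes "finite (carrier G)" "g \<in> carrier G" "g \<noteq> \<one>"
  shows "\<exists>n::nat. Factorial_Ring.prime (ord (g [^] n))"
proof -
  have "ord g \<noteq> 1"
    using ord_eq_1 assms(2,3) by blast
  then obtain p :: nat where p: "Factorial_Ring.prime p" "p dvd ord g"
    using prime_factor_nat by blast
  then obtain q where q: "ord g = p * q"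
    by blast
  have "ord g > 0"
    using ord_ge_1[OF assms(1,2)] by simp
  then have "q \<noteq> 0"
    using q by auto
  then have "ord (g [^] q) = p"
    using ord_pow[OF assms(2)] q by simp
  then show ?thesis
    using p(1) by metis
qed

text \<open>The witness is replaced by a power of prime order: a proper subgroup containing it
  contains its powers.\<close>

lemma not_total_dominating_prime_order_witness:
  assumes "finite (carrier G)" "A \<subseteq> nonid G" "\<not> total_dominating G A"
  shows "\<exists>y\<in>carrier G. Factorial_Ring.prime (ord y) \<and> (\<forall>z\<in>A. in_proper_subgroup G {y, z})"
proof -
  obtain g where g: "g \<in> carrier G" "g \<noteq> \<one>"
    and proper: "\<And>z. z \<in> A \<Longrightarrow> generate G {g, z} \<noteq> carrier G"
    using assms(2,3) unfolding total_dominating_def nonid_def by blast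
  obtain n :: nat where n: "Factorial_Ring.prime (ord (g [^] n))"
    using exists_prime_order_power[OF assms(1) g] by blast
  have "in_proper_subgroup G {g [^] n, z}" if z: "z \<in> A" for z
  proof -
    have "z \<in> carrier G"
      using z assms(2) unfolding nonid_def by blast
    then have K: "subgroup (generate G {g, z}) G"
      using g(1) by (intro generate_is_subgroup) auto
    have "g \<in> generate G {g, z}" "z \<in> generate G {g, z}"
      by (auto intro: generate.incl)
    then have "{g [^] n, z} \<subseteq> generate G {g, z}"
      using subgroup_int_pow_closed[OF K, of g "int n"] by (simp add: int_pow_int)
    then show ?thesis
      unfolding in_proper_subgroup_def using K proper[OF z] by blast
  qed
  then show ?thesis
    using n g(1) by blast
qed

lemma conj_class_subset_nonid: "s \<in> carrier G \<Longrightarrow> s \<noteq> \<one> \<Longrightarrow> conj_class G s \<subseteq> nonid G"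
  unfolding conj_class_def nonid_def
  by auto (metis conjugation_is_inj one_closed r_inv r_one)

lemma finite_max_over: "finite (carrier G) \<Longrightarrow> finite (max_over G s)"
  unfolding max_over_def maximal_subgroup_def
  by (rule finite_subset[of _ "Pow (carrier G)"]) (auto dest: subgroup.subset)

lemma in_proper_subgroup_conj_in_max_over:
  assumes fin: "finite (carrier G)" and s: "s \<in> carrier G" and y: "y \<in> carrier G"
    and h: "h \<in> carrier G" and "in_proper_subgroup G {y, h \<otimes> s \<otimes> inv h}"
  shows "inv h \<otimes> y \<otimes> h \<in> \<Union>(max_over G s)"
proof -
  have "in_proper_subgroup G ((\<lambda>a. inv h \<otimes> a \<otimes> inv (inv h)) ` {y, h \<otimes> s \<otimes> inv h})"
    using assms by (intro in_proper_subgroup_conj) auto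
  moreover have "(\<lambda>a. inv h \<otimes> a \<otimes> inv (inv h)) ` {y, h \<otimes> s \<otimes> inv h} = {inv h \<otimes> y \<otimes> h, s}"
    using inv_conj_conj[OF s h] h by simp
  ultimately obtain M where "maximal_subgroup M G" "{inv h \<otimes> y \<otimes> h, s} \<subseteq> M"
    using in_proper_subgroup_maximal[OF fin] by metis
  then show ?thesis
    unfolding max_over_def by blast
qed

lemma proportion_conj_in_proper_subgroup_le_sum_fpr:
  assumes fin: "finite (carrier G)" and s: "s \<in> carrier G" and y: "y \<in> carrier G"
  shows "real (card {z \<in> conj_class G s. in_proper_subgroup G {y, z}}) / real (card (conj_class G s))
    \<le> (\<Sum>H\<in>max_over G s. fpr G y H)"
proof -
  define D where "D = {z \<in> conj_class G s. in_proper_subgroup G {y, z}}"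
  define U where "U = \<Union>(max_over G s)"
  have back_conj:
    "{h \<in> carrier G. h \<otimes> s \<otimes> inv h \<in> D} \<subseteq> {h \<in> carrier G. inv h \<otimes> y \<otimes> inv (inv h) \<in> U}"
    using in_proper_subgroup_conj_in_max_over[OF fin s y] unfolding D_def U_def by auto
  have "{h \<in> carrier G. h \<otimes> y \<otimes> inv h \<in> U} = {h \<in> carrier G. h \<otimes> y \<otimes> inv h \<in> conj_class G y \<inter> U}"
    using conj_in_conj_class[OF y] by blast
  then have inverted: "card {h \<in> carrier G. inv h \<otimes> y \<otimes> inv (inv h) \<in> U}
      = card {h \<in> carrier G. h \<otimes> y \<otimes> inv h \<in> conj_class G y \<inter> U}"
    using card_Collect_inv[of "\<lambda>h. h \<otimes> y \<otimes> inv h \<in> U"] by simp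
  have "conj_class G y \<inter> U = (\<Union>H\<in>max_over G s. conj_class G y \<inter> H)"
    unfolding U_def by blast
  then have union_bound: "card (conj_class G y \<inter> U) \<le> (\<Sum>H\<in>max_over G s. card (conj_class G y \<inter> H))"
    using card_UN_le[OF finite_max_over[OF fin]] by metis
  have "real (card D) / real (card (conj_class G s))
      = real (card {h \<in> carrier G. h \<otimes> s \<otimes> inv h \<in> D}) / real (order G)"
    using conj_preimage_proportion[OF fin s, of D] unfolding D_def by simp
  also have "\<dots> \<le> real (card {h \<in> carrier G. inv h \<otimes> y \<otimes> inv (inv h) \<in> U}) / real (order G)"
    using card_mono[OF _ back_conj] fin by (intro divide_right_mono) simp_all
  also have "\<dots> = real (card (conj_class G y \<inter> U)) / real (card (conj_class G y))"
    unfolding inverted by (rule conj_preimage_proportion[OF fin y]) blast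
  also have "\<dots> \<le> real (\<Sum>H\<in>max_over G s. card (conj_class G y \<inter> H)) / real (card (conj_class G y))"
    by (intro divide_right_mono of_nat_mono union_bound) simp
  also have "\<dots> = (\<Sum>H\<in>max_over G s. fpr G y H)"
    unfolding fpr_def by (simp add: sum_divide_distrib Int_commute)
  finally show ?thesis
    unfolding D_def .
qed

lemma sum_conj_invariant_over_representatives:
  fixes f :: "'a \<Rightarrow> 'c::comm_semiring_1"
  assumes "finite P" "R \<subseteq> P" "P \<subseteq> carrier G"
    and conj_closed: "\<And>x y. x \<in> P \<Longrightarrow> y \<in> conj_class G x \<Longrightarrow> y \<in> P"
    and representatives: "\<And>y. y \<in> P \<Longrightarrow> \<exists>!x. x \<in> R \<and> y \<in> conj_class G x"
    and class_function: "\<And>x y. x \<in> carrier G \<Longrightarrow> y \<in> conj_class G x \<Longrightarrow> f y = f x"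
  shows "(\<Sum>y\<in>P. f y) = (\<Sum>x\<in>R. of_nat (card (conj_class G x)) * f x)"
proof -
  have classes: "conj_class G x \<subseteq> P" if "x \<in> R" for x
    using that assms(2) conj_closed by blast
  have "P = (\<Union>x\<in>R. conj_class G x)"
    using classes representatives by blast
  moreover have "finite R" "\<forall>x\<in>R. finite (conj_class G x)"
    using assms(1,2) classes finite_subset by metis+
  moreover have "\<forall>x\<in>R. \<forall>x'\<in>R. x \<noteq> x' \<longrightarrow> conj_class G x \<inter> conj_class G x' = {}"
    using classes representatives by blast
  ultimately have "(\<Sum>y\<in>P. f y) = (\<Sum>x\<in>R. \<Sum>y\<in>conj_class G x. f y)"
    by (simp add: sum.UNION_disjoint)
  also have "\<dots> = (\<Sum>x\<in>R. \<Sum>y\<in>conj_class G x. f x)"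
    using assms(2,3) class_function by (intro sum.cong refl) blast
  finally show ?thesis
    by simp
qed

lemma Qprob_le_sum_over_prime_order:
  assumes fin: "finite (carrier G)" and s: "s \<in> carrier G" "s \<noteq> \<one>"
  shows "Qprob G s c
    \<le> (\<Sum>y\<in>{y \<in> carrier G. Factorial_Ring.prime (ord y)}. (\<Sum>H\<in>max_over G s. fpr G y H) ^ c)"
proof -
  define C where "C = conj_class G s"
  define P where "P = {y \<in> carrier G. Factorial_Ring.prime (ord y)}"
  define D where "D y = {z \<in> C. in_proper_subgroup G {y, z}}" for y
  define B where "B = {f \<in> {..<c} \<rightarrow>\<^sub>E C. \<not> total_dominating G (f ` {..<c})}"
  have "finite C"
    unfolding C_def using finite_subset[OF conj_class_subset_carrier[OF s(1)] fin] .
  have bad_tuples: "B \<subseteq> (\<Union>y\<in>P. {..<c} \<rightarrow>\<^sub>E D y)"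
  proof
    fix f assume "f \<in> B"
    then have f: "f \<in> {..<c} \<rightarrow>\<^sub>E C" and "\<not> total_dominating G (f ` {..<c})"
      unfolding B_def by blast+
    moreover have "f ` {..<c} \<subseteq> nonid G"
      using f conj_class_subset_nonid[OF s] unfolding C_def by auto
    ultimately obtain y where "y \<in> P" "\<forall>z\<in>f ` {..<c}. in_proper_subgroup G {y, z}"
      using not_total_dominating_prime_order_witness[OF fin] unfolding P_def by blast
    then show "f \<in> (\<Union>y\<in>P. {..<c} \<rightarrow>\<^sub>E D y)"
      using f unfolding D_def by (auto simp: PiE_iff)
  qed
  have "card B \<le> card (\<Union>y\<in>P. {..<c} \<rightarrow>\<^sub>E D y)"
    using \<open>finite C\<close> fin bad_tuples by (intro card_mono) (simp_all add: P_def D_def finite_PiE)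
  also have "\<dots> \<le> (\<Sum>y\<in>P. card ({..<c} \<rightarrow>\<^sub>E D y))"
    using fin unfolding P_def by (intro card_UN_le) simp
  finally have card_B: "card B \<le> (\<Sum>y\<in>P. card (D y) ^ c)"
    by (simp add: card_PiE)
  have "Qprob G s c = real (card B) / real (card C) ^ c"
    unfolding Qprob_def B_def C_def by (simp add: card_PiE)
  also have "\<dots> \<le> real (\<Sum>y\<in>P. card (D y) ^ c) / real (card C) ^ c"
    by (intro divide_right_mono of_nat_mono card_B) simp
  also have "\<dots> = (\<Sum>y\<in>P. (real (card (D y)) / real (card C)) ^ c)"
    by (simp add: sum_divide_distrib power_divide)
  also have "\<dots> \<le> (\<Sum>y\<in>P. (\<Sum>H\<in>max_over G s. fpr G y H) ^ c)"
    using proportion_conj_in_proper_subgroup_le_sum_fpr[OF fin s(1)]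
    unfolding P_def D_def C_def by (intro sum_mono power_mono) simp_all
  finally show ?thesis
    unfolding P_def .
qed

end

theorem lemma2p5:
  fixes G :: "('a, 'b) monoid_scheme" and s :: 'a and c :: nat and R :: "'a set"
  assumes "group G" and "finite (carrier G)"
    and "s \<in> carrier G" and "s \<noteq> \<one>\<^bsub>G\<^esub>"
    and "c \<ge> 1"
    and "R \<subseteq> carrier G"
    and "\<forall>x \<in> R. Factorial_Ring.prime (group.ord G x)"
    and "\<forall>y \<in> carrier G. Factorial_Ring.prime (group.ord G y) \<longrightarrow> (\<exists>!x. x \<in> R \<and> y \<in> conj_class G x)"
  shows "Qprob G s c \<le>
    (\<Sum>x \<in> R. real (card (conj_class G x)) * (\<Sum>H \<in> max_over G s. fpr G x H) ^ c)"
proof -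
  interpret group G by fact
  let ?P = "{y \<in> carrier G. Factorial_Ring.prime (ord y)}"
  have "Qprob G s c \<le> (\<Sum>y\<in>?P. (\<Sum>H\<in>max_over G s. fpr G y H) ^ c)"
    using Qprob_le_sum_over_prime_order assms(2-4) .
  also have "\<dots> = (\<Sum>x\<in>R. real (card (conj_class G x)) * (\<Sum>H\<in>max_over G s. fpr G x H) ^ c)"
  proof (rule sum_conj_invariant_over_representatives)
    show "finite ?P"
      using assms(2) by simp
    show "R \<subseteq> ?P"
      using assms(6,7) by blast
    show "y \<in> ?P" if "x \<in> ?P" "y \<in> conj_class G x" for x y
      using that ord_conj_class conj_class_subset_carrier by auto
    show "\<exists>!x. x \<in> R \<and> y \<in> conj_class G x" if "y \<in> ?P" for y
      using that assms(8) by blast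
    show "(\<Sum>H\<in>max_over G s. fpr G y H) ^ c = (\<Sum>H\<in>max_over G s. fpr G x H) ^ c"
      if "x \<in> carrier G" "y \<in> conj_class G x" for x y
      using conj_class_eq[OF that] by (simp add: fpr_def)
  qed blast
  finally show ?thesis .
qed

end
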